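(* Let $A$, $B$, $D$ be finitely generated lattices, and assume $D$ has a finite generating set $P$ for which $D$ satisfies Dean's condition (D). If $g\colon A\to D$ and $h\colon B\to D$ are bounded lattice epimorphisms, then their fiber product $C=\{(a,b)\in A\times B : g(a)=h(b)\}$ is a finitely generated sublattice of $A\times B$.
   Context: A lattice homomorphism $g\colon A\to D$ is lower bounded if for every $d\in D$ the set $\{x\in A : g(x)\ge d\}$ is either empty or has a least element; it is upper bounded if for every $d\in D$ the set $\{x\in A : g(x)\le d\}$ is either empty or has a greatest element; it is bounded if it is both lower and upper bounded. A lattice $D$ with finite generating set $P$ satisfies Dean's condition (D) (for $P$) if for all finite subsets $S,T\subseteq D$ with $\bigwedge S\le\bigvee T$ at least one of the following holds: there is $s\in S$ with $s\le\bigvee T$; there is $t\in T$ with $\bigwedge S\le t$; there is $p\in P$ with $\bigwedge S\le p\le\bigvee T$. (In a finitely generated lattice the empty meet is the top and the empty join is the bottom element.) The fiber product of epimorphisms $g\colon A\to D$, $h\colon B\to D$ is the sublattice $\{(a,b)\in A\times B: g(a)=h(b)\}$ of $A\times B$. *)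

theory Defs
  imports Main "HOL-Library.Product_Order"
begin

inductive_set lgen :: "'a::lattice set \<Rightarrow> 'a set" for X :: "'a set" where
  base: "x \<in> X \<Longrightarrow> x \<in> lgen X"
| meet: "x \<in> lgen X \<Longrightarrow> y \<in> lgen X \<Longrightarrow> inf x y \<in> lgen X"
| join: "x \<in> lgen X \<Longrightarrow> y \<in> lgen X \<Longrightarrow> sup x y \<in> lgen X"

definition fin_gen_lattice :: "'a::lattice itself \<Rightarrow> bool" where
  "fin_gen_lattice _ \<longleftrightarrow> (\<exists>X::'a set. finite X \<and> lgen X = UNIV)"

definition fin_gen_sublattice :: "'a::lattice set \<Rightarrow> bool" where
  "fin_gen_sublattice C \<longleftrightarrow> (\<exists>X. finite X \<and> X \<subseteq> C \<and> lgen X = C)"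

definition lattice_hom :: "('a::lattice \<Rightarrow> 'b::lattice) \<Rightarrow> bool" where
  "lattice_hom g \<longleftrightarrow> (\<forall>x y. g (inf x y) = inf (g x) (g y) \<and> g (sup x y) = sup (g x) (g y))"

definition lower_bounded :: "('a::lattice \<Rightarrow> 'b::lattice) \<Rightarrow> bool" where
  "lower_bounded g \<longleftrightarrow> (\<forall>d. {x. d \<le> g x} = {} \<or>
      (\<exists>m. d \<le> g m \<and> (\<forall>x. d \<le> g x \<longrightarrow> m \<le> x)))"

definition upper_bounded :: "('a::lattice \<Rightarrow> 'b::lattice) \<Rightarrow> bool" where
  "upper_bounded g \<longleftrightarrow> (\<forall>d. {x. g x \<le> d} = {} \<or>
      (\<exists>m. g m \<le> d \<and> (\<forall>x. g x \<le> d \<longrightarrow> x \<le> m)))"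

definition bounded_hom :: "('a::lattice \<Rightarrow> 'b::lattice) \<Rightarrow> bool" where
  "bounded_hom g \<longleftrightarrow> lower_bounded g \<and> upper_bounded g"

text \<open>Top and bottom of a (finitely generated, hence bounded) lattice, and finite meets/joins
  with the conventions empty meet = top, empty join = bottom.\<close>
definition lat_top :: "'a::lattice" where "lat_top = (THE t. \<forall>y. y \<le> t)"
definition lat_bot :: "'a::lattice" where "lat_bot = (THE b. \<forall>y. b \<le> y)"

definition fmeet :: "'a::lattice set \<Rightarrow> 'a" where
  "fmeet S = (if S = {} then lat_top else Inf_fin S)"
definition fjoin :: "'a::lattice set \<Rightarrow> 'a" where
  "fjoin T = (if T = {} then lat_bot else Sup_fin T)"

definition dean_condition :: "'a::lattice set \<Rightarrow> bool" where
  "dean_condition P \<longleftrightarrow> finite P \<and> lgen P = UNIV \<and>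
     (\<forall>S T. finite S \<and> finite T \<and> fmeet S \<le> fjoin T \<longrightarrow>
        (\<exists>s\<in>S. s \<le> fjoin T) \<or> (\<exists>t\<in>T. fmeet S \<le> t) \<or> (\<exists>p\<in>P. fmeet S \<le> p \<and> p \<le> fjoin T))"

end

theory Submission
  imports Defs
begin

text \<open>A bounded epimorphism \<open>f\<close> has a lower adjoint \<open>\<beta>\<close> and an upper adjoint \<open>\<alpha>\<close>
  (\<open>\<beta> d\<close> is the least preimage above \<open>d\<close>, \<open>\<alpha> d\<close> the greatest below), both right inverses
  of \<open>f\<close>. The fiber product is generated by the finitely many pairs \<open>(\<alpha>\<^sub>g p, \<beta>\<^sub>h p)\<close>,
  \<open>(\<beta>\<^sub>g p, \<alpha>\<^sub>h p)\<close> for \<open>p \<in> P\<close>, \<open>(a, \<beta>\<^sub>h (g a))\<close>, \<open>(a, \<alpha>\<^sub>h (g a))\<close> for generators \<open>a\<close> of \<open>A\<close>, and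
  their mirror images for generators of \<open>B\<close>.
  Indeed \<open>(a, b) = (a, \<beta>\<^sub>h (g a)) \<squnion> (\<beta>\<^sub>g (h b), b)\<close>, and \<open>a \<mapsto> (a, \<beta>\<^sub>h (g a))\<close> preserves joins
  while its value at \<open>x \<sqinter> y\<close> is cut out by \<open>(\<alpha>\<^sub>g d, \<beta>\<^sub>h d)\<close> with \<open>d = g (x \<sqinter> y)\<close>; so it suffices
  to obtain every \<open>(\<alpha>\<^sub>g d, \<beta>\<^sub>h d)\<close>, by induction over \<open>P\<close>. Condition (D) shows that
  \<open>\<beta>\<^sub>h (d\<^sub>1 \<sqinter> d\<^sub>2)\<close> is the meet of \<open>\<beta>\<^sub>h d\<^sub>1\<close>, \<open>\<beta>\<^sub>h d\<^sub>2\<close>, the \<open>\<beta>\<^sub>h p\<close> with \<open>p \<ge> d\<^sub>1 \<sqinter> d\<^sub>2\<close> and the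
  generators \<open>b\<close> with \<open>h b \<ge> d\<^sub>1 \<sqinter> d\<^sub>2\<close>, each the second component of a pair already obtained
  whose first component lies above \<open>\<alpha>\<^sub>g (d\<^sub>1 \<sqinter> d\<^sub>2)\<close>; dually for joins.\<close>

lemma lattice_hom_inf: "lattice_hom f \<Longrightarrow> f (inf x y) = inf (f x) (f y)"
  unfolding lattice_hom_def by blast

lemma lattice_hom_sup: "lattice_hom f \<Longrightarrow> f (sup x y) = sup (f x) (f y)"
  unfolding lattice_hom_def by blast

lemma lattice_hom_mono: "lattice_hom f \<Longrightarrow> x \<le> y \<Longrightarrow> f x \<le> f y"
  by (metis lattice_hom_inf inf.absorb_iff1 le_iff_inf)

lemma lattice_hom_swap: "lattice_hom prod.swap"
  unfolding lattice_hom_def by (simp add: inf_prod_def sup_prod_def)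

lemma lgen_subset:
  assumes "X \<subseteq> S" "\<And>x y. x \<in> S \<Longrightarrow> y \<in> S \<Longrightarrow> inf x y \<in> S"
    "\<And>x y. x \<in> S \<Longrightarrow> y \<in> S \<Longrightarrow> sup x y \<in> S"
  shows "lgen X \<subseteq> S"
proof
  show "x \<in> S" if "x \<in> lgen X" for x
    using that by induction (use assms in auto)
qed

lemma image_lgen_subset:
  assumes "lattice_hom f"
  shows "f ` lgen X \<subseteq> lgen (f ` X)"
proof clarify
  show "f x \<in> lgen (f ` X)" if "x \<in> lgen X" for x
    using that by induction
      (auto simp: lattice_hom_inf[OF assms] lattice_hom_sup[OF assms] intro: lgen.intros)
qed

lemma Inf_fin_in_lgen:
  assumes "finite F" "F \<noteq> {}" "F \<subseteq> lgen X"
  shows "Inf_fin F \<in> lgen X"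
  using assms by (induction F rule: finite_ne_induct) (auto intro: lgen.meet)

lemma Sup_fin_in_lgen:
  assumes "finite F" "F \<noteq> {}" "F \<subseteq> lgen X"
  shows "Sup_fin F \<in> lgen X"
  using assms by (induction F rule: finite_ne_induct) (auto intro: lgen.join)

lemma dean_condition_binary:
  assumes "dean_condition P" "inf a b \<le> sup c d"
  shows "a \<le> sup c d \<or> b \<le> sup c d \<or> inf a b \<le> c \<or> inf a b \<le> d
    \<or> (\<exists>p\<in>P. inf a b \<le> p \<and> p \<le> sup c d)"
proof -
  have "fmeet {a, b} = inf a b" "fjoin {c, d} = sup c d"
    unfolding fmeet_def fjoin_def by simp_all
  then show ?thesis
    using assms unfolding dean_condition_def by (elim conjE allE[of _ "{a, b}"] allE[of _ "{c, d}"]) auto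
qed

locale bounded_epi =
  fixes f :: "'a::lattice \<Rightarrow> 'b::lattice"
  assumes hom: "lattice_hom f" and surj: "surj f" and bounded: "bounded_hom f"
begin

definition lower_adj :: "'b \<Rightarrow> 'a" where
  "lower_adj d = (LEAST x. d \<le> f x)"

definition upper_adj :: "'b \<Rightarrow> 'a" where
  "upper_adj d = (GREATEST x. f x \<le> d)"

lemma lower_adj_le_iff: "lower_adj d \<le> x \<longleftrightarrow> d \<le> f x"
proof -
  have "{x. d \<le> f x} \<noteq> {}"
    using surj by (metis empty_iff mem_Collect_eq order_refl surjD)
  then obtain m where m: "d \<le> f m" "\<And>x. d \<le> f x \<Longrightarrow> m \<le> x"
    using bounded unfolding bounded_hom_def lower_bounded_def by blast
  then have "lower_adj d = m"
    unfolding lower_adj_def by (rule Least_equality)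
  with m show ?thesis
    using lattice_hom_mono[OF hom] order_trans by metis
qed

lemma le_upper_adj_iff: "x \<le> upper_adj d \<longleftrightarrow> f x \<le> d"
proof -
  have "{x. f x \<le> d} \<noteq> {}"
    using surj by (metis empty_iff mem_Collect_eq order_refl surjD)
  then obtain m where m: "f m \<le> d" "\<And>x. f x \<le> d \<Longrightarrow> x \<le> m"
    using bounded unfolding bounded_hom_def upper_bounded_def by blast
  then have "upper_adj d = m"
    unfolding upper_adj_def by (rule Greatest_equality)
  with m show ?thesis
    using lattice_hom_mono[OF hom] order_trans by metis
qed

lemma f_lower_adj [simp]: "f (lower_adj d) = d"
proof -
  obtain x where "f x = d" using surj by (metis surjD)
  then show ?thesis
    by (metis antisym lattice_hom_mono[OF hom] lower_adj_le_iff order_refl)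
qed

lemma f_upper_adj [simp]: "f (upper_adj d) = d"
proof -
  obtain x where "f x = d" using surj by (metis surjD)
  then show ?thesis
    by (metis antisym lattice_hom_mono[OF hom] le_upper_adj_iff order_refl)
qed

lemma lower_adj_mono: "d \<le> e \<Longrightarrow> lower_adj d \<le> lower_adj e"
  by (simp add: lower_adj_le_iff)

lemma upper_adj_mono: "d \<le> e \<Longrightarrow> upper_adj d \<le> upper_adj e"
  by (simp add: le_upper_adj_iff)

lemma lower_adj_sup: "lower_adj (sup d e) = sup (lower_adj d) (lower_adj e)"
  by (rule antisym) (simp_all add: lower_adj_le_iff lattice_hom_sup[OF hom] sup_mono)

lemma upper_adj_inf: "upper_adj (inf d e) = inf (upper_adj d) (upper_adj e)"
  by (rule antisym) (simp_all add: le_upper_adj_iff lattice_hom_inf[OF hom] inf_mono)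

lemma le_lower_adj_inf:
  assumes gen: "lgen X = UNIV" and dean: "dean_condition P"
    and "c \<le> lower_adj d\<^sub>1" "c \<le> lower_adj d\<^sub>2"
    and below_P: "\<And>p. p \<in> P \<Longrightarrow> inf d\<^sub>1 d\<^sub>2 \<le> p \<Longrightarrow> c \<le> lower_adj p"
    and below_X: "\<And>x. x \<in> X \<Longrightarrow> inf d\<^sub>1 d\<^sub>2 \<le> f x \<Longrightarrow> c \<le> x"
  shows "c \<le> lower_adj (inf d\<^sub>1 d\<^sub>2)"
proof -
  have "c \<le> b" if "b \<in> lgen X" "inf d\<^sub>1 d\<^sub>2 \<le> f b" for b
    using that
  proof induction
    case (base x)
    then show ?case by (rule below_X)
  next
    case (meet x y)
    then show ?case by (simp add: lattice_hom_inf[OF hom])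
  next
    case (join x y)
    then have "inf d\<^sub>1 d\<^sub>2 \<le> sup (f x) (f y)"
      by (simp add: lattice_hom_sup[OF hom])
    have to_join: "lower_adj e \<le> sup x y" if "e \<le> sup (f x) (f y)" for e
      using that by (simp add: lower_adj_le_iff lattice_hom_sup[OF hom])
    from dean_condition_binary[OF dean \<open>inf d\<^sub>1 d\<^sub>2 \<le> sup (f x) (f y)\<close>]
    show ?case
      using assms(3,4) join.IH below_P to_join by (meson order_trans sup_ge1 sup_ge2)
  qed
  then show ?thesis
    using gen by (simp add: lower_adj_le_iff[symmetric])
qed

lemma upper_adj_sup_le:
  assumes gen: "lgen X = UNIV" and dean: "dean_condition P"
    and "upper_adj d\<^sub>1 \<le> c" "upper_adj d\<^sub>2 \<le> c"
    and above_P: "\<And>p. p \<in> P \<Longrightarrow> p \<le> sup d\<^sub>1 d\<^sub>2 \<Longrightarrow> upper_adj p \<le> c"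
    and above_X: "\<And>x. x \<in> X \<Longrightarrow> f x \<le> sup d\<^sub>1 d\<^sub>2 \<Longrightarrow> x \<le> c"
  shows "upper_adj (sup d\<^sub>1 d\<^sub>2) \<le> c"
proof -
  have "b \<le> c" if "b \<in> lgen X" "f b \<le> sup d\<^sub>1 d\<^sub>2" for b
    using that
  proof induction
    case (base x)
    then show ?case by (rule above_X)
  next
    case (join x y)
    then show ?case by (simp add: lattice_hom_sup[OF hom])
  next
    case (meet x y)
    then have "inf (f x) (f y) \<le> sup d\<^sub>1 d\<^sub>2"
      by (simp add: lattice_hom_inf[OF hom])
    have from_meet: "inf x y \<le> upper_adj e" if "inf (f x) (f y) \<le> e" for e
      using that by (simp add: le_upper_adj_iff lattice_hom_inf[OF hom])
    from dean_condition_binary[OF dean \<open>inf (f x) (f y) \<le> sup d\<^sub>1 d\<^sub>2\<close>]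
    show ?case
      using assms(3,4) meet.IH above_P from_meet by (meson order_trans inf_le1 inf_le2)
  qed
  then show ?thesis
    using gen by (simp add: le_upper_adj_iff[symmetric])
qed

end

locale fiber_product = g: bounded_epi g + h: bounded_epi h
  for g :: "'a::lattice \<Rightarrow> 'd::lattice" and h :: "'b::lattice \<Rightarrow> 'd" +
  fixes P :: "'d set" and XA :: "'a set" and XB :: "'b set"
  assumes dean: "dean_condition P"
    and gen_A: "finite XA" "lgen XA = UNIV" and gen_B: "finite XB" "lgen XB = UNIV"
begin

lemma finite_P: "finite P"
  using dean unfolding dean_condition_def by blast

definition generators :: "('a \<times> 'b) set" where
  "generators =
     (\<lambda>a. (a, h.lower_adj (g a))) ` XA \<union> (\<lambda>a. (a, h.upper_adj (g a))) ` XA \<union>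
     (\<lambda>b. (g.lower_adj (h b), b)) ` XB \<union> (\<lambda>b. (g.upper_adj (h b), b)) ` XB \<union>
     (\<lambda>p. (g.upper_adj p, h.lower_adj p)) ` P \<union> (\<lambda>p. (g.lower_adj p, h.upper_adj p)) ` P"

lemma finite_generators: "finite generators"
  unfolding generators_def using gen_A gen_B finite_P by simp

lemma lgen_generators_subset: "lgen generators \<subseteq> {(a, b). g a = h b}"
  by (rule lgen_subset)
    (auto simp: generators_def inf_prod_def sup_prod_def
      lattice_hom_inf[OF g.hom] lattice_hom_inf[OF h.hom]
      lattice_hom_sup[OF g.hom] lattice_hom_sup[OF h.hom])

lemma upper_lower_inf_in_lgen:
  assumes "(g.upper_adj d\<^sub>1, h.lower_adj d\<^sub>1) \<in> lgen generators"
    "(g.upper_adj d\<^sub>2, h.lower_adj d\<^sub>2) \<in> lgen generators"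
  shows "(g.upper_adj (inf d\<^sub>1 d\<^sub>2), h.lower_adj (inf d\<^sub>1 d\<^sub>2)) \<in> lgen generators"
proof -
  let ?d = "inf d\<^sub>1 d\<^sub>2"
  define F where "F = {(g.upper_adj d\<^sub>1, h.lower_adj d\<^sub>1), (g.upper_adj d\<^sub>2, h.lower_adj d\<^sub>2)}
    \<union> (\<lambda>p. (g.upper_adj p, h.lower_adj p)) ` {p \<in> P. ?d \<le> p}
    \<union> (\<lambda>x. (g.upper_adj (h x), x)) ` {x \<in> XB. ?d \<le> h x}"
  have F: "finite F" "F \<noteq> {}" "F \<subseteq> lgen generators"
    unfolding F_def using assms finite_P gen_B by (auto simp: generators_def intro: lgen.base)
  define z where "z = Inf_fin F"
  have below: "fst z \<le> a \<and> snd z \<le> b" if "(a, b) \<in> F" for a b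
    using Inf_fin.coboundedI[OF F(1) that] by (simp add: z_def less_eq_prod_def)
  have "fst z \<le> inf (g.upper_adj d\<^sub>1) (g.upper_adj d\<^sub>2)"
    using below[of "g.upper_adj d\<^sub>1" "h.lower_adj d\<^sub>1"] below[of "g.upper_adj d\<^sub>2" "h.lower_adj d\<^sub>2"]
    by (simp add: F_def)
  then have "fst z \<le> g.upper_adj ?d"
    by (simp add: g.upper_adj_inf)
  moreover have "snd z \<le> h.lower_adj ?d"
  proof (rule h.le_lower_adj_inf[OF gen_B(2) dean])
    show "snd z \<le> h.lower_adj d\<^sub>1" "snd z \<le> h.lower_adj d\<^sub>2"
      using below[of "g.upper_adj d\<^sub>1" "h.lower_adj d\<^sub>1"] below[of "g.upper_adj d\<^sub>2" "h.lower_adj d\<^sub>2"]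
      by (simp_all add: F_def)
    show "snd z \<le> h.lower_adj p" if "p \<in> P" "?d \<le> p" for p
      using below[of "g.upper_adj p" "h.lower_adj p"] that by (simp add: F_def)
    show "snd z \<le> x" if "x \<in> XB" "?d \<le> h x" for x
      using below[of "g.upper_adj (h x)" x] that by (simp add: F_def)
  qed
  moreover have "(g.upper_adj ?d, h.lower_adj ?d) \<le> z"
    unfolding z_def using F
    by (intro Inf_fin.boundedI)
      (auto simp: F_def less_eq_prod_def g.upper_adj_mono h.lower_adj_mono h.lower_adj_le_iff)
  ultimately have "z = (g.upper_adj ?d, h.lower_adj ?d)"
    by (simp add: less_eq_prod_def prod_eq_iff)
  with Inf_fin_in_lgen[OF F] show ?thesis by (simp add: z_def)
qed

lemma upper_lower_sup_in_lgen:
  assumes "(g.upper_adj d\<^sub>1, h.lower_adj d\<^sub>1) \<in> lgen generators"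
    "(g.upper_adj d\<^sub>2, h.lower_adj d\<^sub>2) \<in> lgen generators"
  shows "(g.upper_adj (sup d\<^sub>1 d\<^sub>2), h.lower_adj (sup d\<^sub>1 d\<^sub>2)) \<in> lgen generators"
proof -
  let ?d = "sup d\<^sub>1 d\<^sub>2"
  define F where "F = {(g.upper_adj d\<^sub>1, h.lower_adj d\<^sub>1), (g.upper_adj d\<^sub>2, h.lower_adj d\<^sub>2)}
    \<union> (\<lambda>p. (g.upper_adj p, h.lower_adj p)) ` {p \<in> P. p \<le> ?d}
    \<union> (\<lambda>x. (x, h.lower_adj (g x))) ` {x \<in> XA. g x \<le> ?d}"
  have F: "finite F" "F \<noteq> {}" "F \<subseteq> lgen generators"
    unfolding F_def using assms finite_P gen_A by (auto simp: generators_def intro: lgen.base)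
  define z where "z = Sup_fin F"
  have above: "a \<le> fst z \<and> b \<le> snd z" if "(a, b) \<in> F" for a b
    using Sup_fin.coboundedI[OF F(1) that] by (simp add: z_def less_eq_prod_def)
  have "sup (h.lower_adj d\<^sub>1) (h.lower_adj d\<^sub>2) \<le> snd z"
    using above[of "g.upper_adj d\<^sub>1" "h.lower_adj d\<^sub>1"] above[of "g.upper_adj d\<^sub>2" "h.lower_adj d\<^sub>2"]
    by (simp add: F_def)
  then have "h.lower_adj ?d \<le> snd z"
    by (simp add: h.lower_adj_sup)
  moreover have "g.upper_adj ?d \<le> fst z"
  proof (rule g.upper_adj_sup_le[OF gen_A(2) dean])
    show "g.upper_adj d\<^sub>1 \<le> fst z" "g.upper_adj d\<^sub>2 \<le> fst z"
      using above[of "g.upper_adj d\<^sub>1" "h.lower_adj d\<^sub>1"] above[of "g.upper_adj d\<^sub>2" "h.lower_adj d\<^sub>2"]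
      by (simp_all add: F_def)
    show "g.upper_adj p \<le> fst z" if "p \<in> P" "p \<le> ?d" for p
      using above[of "g.upper_adj p" "h.lower_adj p"] that by (simp add: F_def)
    show "x \<le> fst z" if "x \<in> XA" "g x \<le> ?d" for x
      using above[of x "h.lower_adj (g x)"] that by (simp add: F_def)
  qed
  moreover have "z \<le> (g.upper_adj ?d, h.lower_adj ?d)"
    unfolding z_def using F
    by (intro Sup_fin.boundedI)
      (auto simp: F_def less_eq_prod_def g.upper_adj_mono h.lower_adj_mono g.le_upper_adj_iff)
  ultimately have "z = (g.upper_adj ?d, h.lower_adj ?d)"
    by (simp add: less_eq_prod_def prod_eq_iff)
  with Sup_fin_in_lgen[OF F] show ?thesis by (simp add: z_def)
qed

lemma upper_lower_in_lgen: "(g.upper_adj d, h.lower_adj d) \<in> lgen generators"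
proof -
  have "d \<in> lgen P" using dean unfolding dean_condition_def by blast
  then show ?thesis
  proof induction
    case (base p)
    then show ?case by (auto simp: generators_def intro: lgen.base)
  qed (auto intro: upper_lower_inf_in_lgen upper_lower_sup_in_lgen)
qed

lemma graph_lower_in_lgen: "(a, h.lower_adj (g a)) \<in> lgen generators"
proof -
  have "a \<in> lgen XA" using gen_A by simp
  then show ?thesis
  proof induction
    case (base x)
    then show ?case by (auto simp: generators_def intro: lgen.base)
  next
    case (meet x y)
    let ?d = "g (inf x y)"
    have "inf x y \<le> g.upper_adj ?d"
      by (simp add: g.le_upper_adj_iff)
    moreover have "h.lower_adj ?d \<le> inf (h.lower_adj (g x)) (h.lower_adj (g y))"
      by (simp add: h.lower_adj_mono lattice_hom_inf[OF g.hom])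
    ultimately have "inf (inf (x, h.lower_adj (g x)) (y, h.lower_adj (g y))) (g.upper_adj ?d, h.lower_adj ?d)
        = (inf x y, h.lower_adj ?d)"
      by (simp add: inf_prod_def inf_absorb1 inf_absorb2)
    with meet.IH upper_lower_in_lgen show ?case
      by (metis lgen.meet)
  next
    case (join x y)
    then show ?case
      using lgen.join[OF join.IH] by (simp add: lattice_hom_sup[OF g.hom] h.lower_adj_sup)
  qed
qed

lemma lower_graph_in_lgen: "(g.lower_adj (h b), b) \<in> lgen generators"
proof -
  interpret swapped: fiber_product h g P XB XA
    by unfold_locales (use dean gen_A gen_B in auto)
  have swapped_generators: "swapped.generators = prod.swap ` generators"
    unfolding swapped.generators_def generators_def by (auto simp: image_Un image_image)
  have "prod.swap (b, g.lower_adj (h b)) \<in> prod.swap ` lgen (prod.swap ` generators)"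
    using swapped.graph_lower_in_lgen by (simp add: swapped_generators)
  also have "\<dots> \<subseteq> lgen (prod.swap ` prod.swap ` generators)"
    by (rule image_lgen_subset[OF lattice_hom_swap])
  finally show ?thesis by (simp add: image_image)
qed

lemma lgen_generators: "lgen generators = {(a, b). g a = h b}"
proof (rule antisym[OF lgen_generators_subset], clarify)
  fix a b assume "g a = h b"
  then have "(a, b) = sup (a, h.lower_adj (g a)) (g.lower_adj (h b), b)"
    by (simp add: sup_prod_def g.lower_adj_le_iff h.lower_adj_le_iff sup_absorb1 sup_absorb2)
  then show "(a, b) \<in> lgen generators"
    by (metis graph_lower_in_lgen lower_graph_in_lgen lgen.join)
qed

lemma fin_gen_fiber_product: "fin_gen_sublattice {(a, b). g a = h b}"
  unfolding fin_gen_sublattice_def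
  using finite_generators lgen_generators lgen.base by blast

end

theorem mainTheorem1:
  fixes g :: "'a::lattice \<Rightarrow> 'd::lattice" and h :: "'b::lattice \<Rightarrow> 'd" and P :: "'d set"
  assumes "fin_gen_lattice TYPE('a)" and "fin_gen_lattice TYPE('b)" and "fin_gen_lattice TYPE('d)"
    and "dean_condition P"
    and "lattice_hom g" and "surj g" and "bounded_hom g"
    and "lattice_hom h" and "surj h" and "bounded_hom h"
  shows "fin_gen_sublattice {(a, b). g a = h b}"
proof -
  obtain XA :: "'a set" where "finite XA" "lgen XA = UNIV"
    using assms(1) unfolding fin_gen_lattice_def by blast
  moreover obtain XB :: "'b set" where "finite XB" "lgen XB = UNIV"
    using assms(2) unfolding fin_gen_lattice_def by blast
  ultimately interpret fiber_product g h P XA XB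
    using assms by unfold_locales auto
  show ?thesis by (rule fin_gen_fiber_product)
qed

end
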